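(* Given a set of $n_0$ points in $\mathbb{R}^1$, one can maintain a unimax coloring of the current point set with respect to intervals under deletions, using $\lceil\log n_0\rceil$ colors and at the cost of one recoloring per deletion.
   Context: A coloring of a finite point set $P\subset\mathbb{R}$ by integers is unimax with respect to intervals if for every interval $I$ containing at least one point of $P$, the maximum color among the points of $P\cap I$ is attained by exactly one point. A recoloring is a change of color of one remaining point. *)

theory Defs
  imports Complex_Main
begin

definition real_interval :: "real set \<Rightarrow> bool" where
  "real_interval I \<longleftrightarrow> (\<forall>x\<in>I. \<forall>z\<in>I. \<forall>y. x \<le> y \<and> y \<le> z \<longrightarrow> y \<in> I)"

definition unimax_intervals :: "real set \<Rightarrow> (real \<Rightarrow> int) \<Rightarrow> bool" where
  "unimax_intervals P c \<longleftrightarrow>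
     (\<forall>I. real_interval I \<and> P \<inter> I \<noteq> {} \<longrightarrow>
        card {p \<in> P \<inter> I. c p = Max (c ` (P \<inter> I))} = 1)"

end

theory Submission
  imports Defs
begin

text \<open>A colouring is unimax for intervals as soon as any two points of equal colour are
  separated by a point of larger colour. Fewer than \<open>2\<^sup>k\<close> points admit such a colouring
  by \<open>{1..k}\<close>: give the median colour \<open>k\<close> and colour the two halves recursively.
  When a point \<open>q\<close> is deleted, merge it into an adjacent point \<open>u\<close> and give \<open>u\<close> the larger
  of the two colours: separation survives any monotone merging of points that takes maxima
  of colours on the merged blocks, and only \<open>u\<close> is recoloured.\<close>

definition equal_colours_separated :: "'a::linorder set \<Rightarrow> ('a \<Rightarrow> 'b::linorder) \<Rightarrow> bool" where
  "equal_colours_separated Q c \<longleftrightarrow>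
     (\<forall>a\<in>Q. \<forall>b\<in>Q. a < b \<and> c a = c b \<longrightarrow> (\<exists>x\<in>Q. a < x \<and> x < b \<and> c a < c x))"

lemma equal_colours_separated_cong:
  "(\<And>x. x \<in> Q \<Longrightarrow> c x = c' x) \<Longrightarrow>
     equal_colours_separated Q c \<longleftrightarrow> equal_colours_separated Q c'"
  unfolding equal_colours_separated_def by (simp cong: ball_cong)

lemma equal_colours_separated_imp_unimax_intervals:
  assumes "finite Q" and sep: "equal_colours_separated Q c"
  shows "unimax_intervals Q c"
  unfolding unimax_intervals_def
proof (intro allI impI)
  fix I assume I: "real_interval I \<and> Q \<inter> I \<noteq> {}"
  have fin: "finite (Q \<inter> I)" using assms(1) by auto
  let ?M = "Max (c ` (Q \<inter> I))"
  let ?A = "{p \<in> Q \<inter> I. c p = ?M}"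
  have "?M \<in> c ` (Q \<inter> I)" using fin I by (intro Max_in) auto
  then obtain a where a: "a \<in> ?A" by auto
  have no_pair: False if "u \<in> ?A" "v \<in> ?A" "u < v" for u v
  proof -
    have "u \<in> Q" "v \<in> Q" "c u = c v" using that by auto
    then obtain x where x: "x \<in> Q" "u < x" "x < v" "c u < c x"
      using sep \<open>u < v\<close> unfolding equal_colours_separated_def by blast
    have "u \<in> I" "v \<in> I" "u \<le> x" "x \<le> v" using that x by auto
    hence "x \<in> I" using I unfolding real_interval_def by blast
    hence "c x \<le> ?M" using fin x(1) by simp
    thus False using x(4) that(1) by simp
  qed
  have "p = a" if "p \<in> ?A" for p
    using no_pair[OF that a] no_pair[OF a that] by (cases p a rule: linorder_cases) auto
  hence "?A = {a}" using a by blast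
  thus "card ?A = 1" by simp
qed

lemma equal_colours_separated_merge:
  assumes fin: "finite Q" and sep: "equal_colours_separated Q c" and mono: "mono_on Q f"
  shows "equal_colours_separated (f ` Q) (\<lambda>y. Max (c ` {x \<in> Q. f x = y}))"
    (is "equal_colours_separated _ ?c")
  unfolding equal_colours_separated_def
proof (intro ballI impI)
  have block_max: "?c y \<in> c ` {x \<in> Q. f x = y}" "\<And>x. x \<in> Q \<Longrightarrow> f x = y \<Longrightarrow> c x \<le> ?c y"
    if "y \<in> f ` Q" for y
    using fin that by (auto intro!: Max_in)
  fix a b assume ab: "a \<in> f ` Q" "b \<in> f ` Q" "a < b \<and> ?c a = ?c b"
  obtain a' where a': "a' \<in> Q" "f a' = a" "c a' = ?c a" using block_max(1)[OF ab(1)] by auto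
  obtain b' where b': "b' \<in> Q" "f b' = b" "c b' = ?c b" using block_max(1)[OF ab(2)] by auto
  have "a' < b'"
  proof (rule ccontr)
    assume "\<not> a' < b'"
    hence "b \<le> a" using mono_onD[OF mono b'(1) a'(1)] a'(2) b'(2) by simp
    thus False using ab(3) by (meson leD)
  qed
  moreover have "c a' = c b'" using a'(3) b'(3) ab(3) by simp
  ultimately obtain x where x: "x \<in> Q" "a' < x" "x < b'" "c a' < c x"
    using sep a'(1) b'(1) unfolding equal_colours_separated_def by blast
  have "c x \<le> ?c (f x)" using block_max(2)[of "f x" x] x(1) by blast
  hence large: "?c a < ?c (f x)" using x(4) a'(3) by simp
  have "a \<le> f x" "f x \<le> b"
    using mono_onD[OF mono a'(1) x(1)] mono_onD[OF mono x(1) b'(1)] x(2,3) a'(2) b'(2) by simp_all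
  moreover have "f x \<noteq> a" "f x \<noteq> b" using large ab(3) by auto
  ultimately have "a < f x" "f x < b" by simp_all
  thus "\<exists>y\<in>f ` Q. a < y \<and> y < b \<and> ?c a < ?c y" using x(1) large by blast
qed

lemma exists_adjacent_point:
  fixes Q :: "'a::linorder set"
  assumes "finite Q" "q \<in> Q" "Q \<noteq> {q}"
  obtains u where "u \<in> Q" "u \<noteq> q" "\<And>x. x \<in> Q \<Longrightarrow> x \<le> min u q \<or> max u q \<le> x"
proof (cases "\<exists>p\<in>Q. p < q")
  case True
  define u where "u = Max {p \<in> Q. p < q}"
  have "u \<in> {p \<in> Q. p < q}" unfolding u_def using assms True by (intro Max_in) auto
  hence u: "u \<in> Q" "u < q" by auto
  have "x \<le> u \<or> q \<le> x" if "x \<in> Q" for x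
    using assms that unfolding u_def by (cases "x < q") auto
  with u show thesis by (intro that[of u]) (auto simp: min_def max_def)
next
  case False
  define u where "u = Min (Q - {q})"
  have u: "u \<in> Q" "u \<noteq> q" unfolding u_def using assms Min_in[of "Q - {q}"] by auto
  have "x = q \<or> u \<le> x" if "x \<in> Q" for x
    using assms that unfolding u_def by auto
  moreover have "q < u" using False u by auto
  ultimately show thesis using u by (intro that[of u]) (auto simp: min_def max_def)
qed

lemma equal_colours_separated_delete:
  assumes fin: "finite Q" and sep: "equal_colours_separated Q c" and "q \<in> Q"
  obtains c' where "equal_colours_separated (Q - {q}) c'"
    "card {p \<in> Q - {q}. c' p \<noteq> c p} \<le> 1" "c' ` (Q - {q}) \<subseteq> c ` Q"
proof (cases "Q = {q}")
  case True
  thus thesis by (intro that[of c]) (auto simp: equal_colours_separated_def)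
next
  case False
  obtain u where u: "u \<in> Q" "u \<noteq> q" "\<And>x. x \<in> Q \<Longrightarrow> x \<le> min u q \<or> max u q \<le> x"
    using exists_adjacent_point[OF fin \<open>q \<in> Q\<close> False] by blast
  define f where "f x = (if x = q then u else x)" for x
  define c' where "c' y = Max (c ` {x \<in> Q. f x = y})" for y
  have "mono_on Q f"
  proof (rule mono_onI)
    fix x y assume "x \<in> Q" "y \<in> Q" "x \<le> y"
    thus "f x \<le> f y"
      using u(3)[of x] u(3)[of y] unfolding f_def by (auto simp: min_def max_def split: if_splits)
  qed
  hence "equal_colours_separated (f ` Q) c'"
    unfolding c'_def by (rule equal_colours_separated_merge[OF fin sep])
  moreover have image: "f ` Q = Q - {q}" using u \<open>q \<in> Q\<close> unfolding f_def by auto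
  ultimately have "equal_colours_separated (Q - {q}) c'" by simp
  moreover have "c' p = c p" if "p \<in> Q - {q}" "p \<noteq> u" for p
  proof -
    have "{x \<in> Q. f x = p} = {p}" using that u unfolding f_def by auto
    thus ?thesis unfolding c'_def by simp
  qed
  hence "card {p \<in> Q - {q}. c' p \<noteq> c p} \<le> card {u}"
    by (intro card_mono) auto
  moreover have "c' ` (Q - {q}) \<subseteq> c ` Q"
  proof
    fix y assume "y \<in> c' ` (Q - {q})"
    then obtain p where "p \<in> f ` Q" "y = c' p" using image by auto
    thus "y \<in> c ` Q" using fin unfolding c'_def by (auto intro!: subsetD[OF _ Max_in])
  qed
  ultimately show thesis by (intro that) auto
qed

lemma exists_point_of_rank:
  fixes P :: "'a::linorder set"
  assumes "finite P" "i < card P"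
  obtains m where "m \<in> P" "card {p \<in> P. p < m} = i"
proof -
  let ?rank = "\<lambda>m. card {p \<in> P. p < m}"
  have "?rank x < ?rank y" if "x \<in> P" "x < y" for x y
  proof (intro psubset_card_mono)
    have "{p \<in> P. p < x} \<subseteq> {p \<in> P. p < y}" using \<open>x < y\<close> by auto
    moreover have "x \<in> {p \<in> P. p < y} - {p \<in> P. p < x}" using that by simp
    ultimately show "{p \<in> P. p < x} \<subset> {p \<in> P. p < y}" by blast
  qed (use assms(1) in simp)
  hence "strict_mono_on P ?rank" by (intro strict_mono_onI)
  hence "card (?rank ` P) = card {..<card P}" by (simp add: card_image strict_mono_on_imp_inj_on)
  moreover have "?rank x < card P" if "x \<in> P" for x
    using assms(1) that by (intro psubset_card_mono) auto
  hence "?rank ` P \<subseteq> {..<card P}" by (simp add: image_subset_iff)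
  ultimately have "?rank ` P = {..<card P}" by (intro card_subset_eq) simp_all
  hence "i \<in> ?rank ` P" using assms(2) by simp
  thus thesis using that by blast
qed

lemma equal_colours_separated_insert_peak:
  fixes c :: "'a::linorder \<Rightarrow> 'b::linorder"
  assumes below: "\<forall>a\<in>A. a < m" and above: "\<forall>b\<in>B. m < b"
    and sepA: "equal_colours_separated A c" and sepB: "equal_colours_separated B c"
    and peak: "\<forall>x\<in>A \<union> B. c x < c m"
  shows "equal_colours_separated (insert m (A \<union> B)) c"
  unfolding equal_colours_separated_def
proof (intro ballI impI)
  fix a b assume ab: "a \<in> insert m (A \<union> B)" "b \<in> insert m (A \<union> B)" "a < b \<and> c a = c b"
  have not_peak: "c x \<noteq> c m" if "x \<in> A \<union> B" for x using bspec[OF peak that] by (rule less_imp_neq)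
  have "a \<noteq> m" "b \<noteq> m" using ab not_peak[of a] not_peak[of b] by auto
  hence "a \<in> A \<union> B" "b \<in> A \<union> B" using ab(1,2) by auto
  moreover have "\<not> (a \<in> B \<and> b \<in> A)" using below above ab(3) by (meson less_trans not_less_iff_gr_or_eq)
  ultimately consider "a \<in> A" "b \<in> A" | "a \<in> B" "b \<in> B" | "a \<in> A" "b \<in> B" by blast
  thus "\<exists>x\<in>insert m (A \<union> B). a < x \<and> x < b \<and> c a < c x"
  proof cases
    case 1
    thus ?thesis using sepA ab(3) unfolding equal_colours_separated_def by blast
  next
    case 2
    thus ?thesis using sepB ab(3) unfolding equal_colours_separated_def by blast
  next
    case 3
    thus ?thesis using below above peak by blast
  qed
qed

lemma exists_median_split:
  fixes P :: "'a::linorder set"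
  assumes "finite P" "P \<noteq> {}" "card P < 2 * t"
  obtains m where "m \<in> P" "card {p \<in> P. p < m} < t" "card {p \<in> P. m < p} < t"
proof -
  have "0 < card P" using assms(1,2) by (simp add: card_gt_0_iff)
  hence "(card P - 1) div 2 < card P" by linarith
  then obtain m where m: "m \<in> P" "card {p \<in> P. p < m} = (card P - 1) div 2"
    using exists_point_of_rank[OF assms(1)] by blast
  define A where "A = {p \<in> P. p < m}"
  define B where "B = {p \<in> P. m < p}"
  have fin: "finite A" "finite B" using assms(1) unfolding A_def B_def by simp_all
  have P: "P = insert m (A \<union> B)" using m unfolding A_def B_def by auto
  have "card P = Suc (card (A \<union> B))" unfolding P using fin by (simp add: A_def B_def)
  also have "card (A \<union> B) = card A + card B"
    using fin by (intro card_Un_disjoint) (auto simp: A_def B_def)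
  finally have "card P = Suc (card A + card B)" .
  moreover have "card A = (card P - 1) div 2" using m(2) unfolding A_def .
  moreover have "(card P - 1) div 2 * 2 + (card P - 1) mod 2 = card P - 1"
    by (rule div_mult_mod_eq)
  moreover have "(card P - 1) mod 2 < 2" by simp
  ultimately have "card A < t" "card B < t" using assms(3) by linarith+
  thus thesis using that m(1) unfolding A_def B_def by blast
qed

lemma exists_equal_colours_separated:
  fixes P :: "'a::linorder set"
  assumes "finite P" "card P < 2 ^ k"
  shows "\<exists>c. equal_colours_separated P c \<and> c ` P \<subseteq> {1..int k}"
  using assms
proof (induction k arbitrary: P)
  case 0
  thus ?case by (simp add: equal_colours_separated_def)
next
  case (Suc k)
  show ?case
  proof (cases "P = {}")
    case True
    thus ?thesis by (simp add: equal_colours_separated_def)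
  next
    case False
    have "card P < 2 * 2 ^ k" using Suc.prems(2) by simp
    then obtain m where m: "m \<in> P" "card {p \<in> P. p < m} < 2 ^ k" "card {p \<in> P. m < p} < 2 ^ k"
      using exists_median_split[OF Suc.prems(1) False] by blast
    define A where "A = {p \<in> P. p < m}"
    define B where "B = {p \<in> P. m < p}"
    have P: "P = insert m (A \<union> B)" using m(1) unfolding A_def B_def by auto
    have fin: "finite A" "finite B" using Suc.prems(1) unfolding A_def B_def by simp_all
    obtain cA where cA: "equal_colours_separated A cA" "cA ` A \<subseteq> {1..int k}"
      using Suc.IH[OF fin(1)] m(2) unfolding A_def by blast
    obtain cB where cB: "equal_colours_separated B cB" "cB ` B \<subseteq> {1..int k}"
      using Suc.IH[OF fin(2)] m(3) unfolding B_def by blast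
    define c where "c x = (if x < m then cA x else if x = m then int (Suc k) else cB x)" for x
    have "equal_colours_separated A c"
      using cA(1) by (subst equal_colours_separated_cong[of A c cA]) (simp_all add: A_def c_def)
    moreover have "equal_colours_separated B c"
      using cB(1) by (subst equal_colours_separated_cong[of B c cB]) (auto simp: B_def c_def)
    moreover have range: "c ` (A \<union> B) \<subseteq> {1..int k}"
      using cA(2) cB(2) unfolding c_def A_def B_def by auto
    moreover have "\<forall>x\<in>A \<union> B. c x < c m"
    proof
      fix x assume "x \<in> A \<union> B"
      hence "c x \<le> int k" using range by auto
      thus "c x < c m" by (simp add: c_def)
    qed
    ultimately have "equal_colours_separated P c"
      unfolding P by (intro equal_colours_separated_insert_peak) (simp_all add: A_def B_def)
    moreover have "c ` P \<subseteq> {1..int (Suc k)}" using range unfolding P by (auto simp: c_def)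
    ultimately show ?thesis by blast
  qed
qed

lemma less_two_power_ceiling_log:
  "n < 2 ^ nat \<lceil>log 2 (real n + 1)\<rceil>"
proof -
  let ?k = "nat \<lceil>log 2 (real n + 1)\<rceil>"
  have "log 2 (real n + 1) \<le> real ?k" by linarith
  hence "2 powr log 2 (real n + 1) \<le> 2 powr real ?k" by (rule powr_mono) simp
  also have "2 powr real ?k = 2 ^ ?k" by (rule powr_realpow) simp
  finally have "real n + 1 \<le> 2 ^ ?k" by simp
  hence "real (n + 1) \<le> real (2 ^ ?k)" by simp
  thus ?thesis by linarith
qed

theorem mainTheorem12:
  fixes P :: "real set"
  assumes "finite P"
  shows "\<exists>S :: (real set \<times> (real \<Rightarrow> int)) set.
     (\<exists>c0. (P, c0) \<in> S) \<and>
     (\<forall>(Q, c) \<in> S. Q \<subseteq> P \<and> unimax_intervals Q c \<and>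
        c ` Q \<subseteq> {1 .. \<lceil>log 2 (real (card P) + 1)\<rceil>}) \<and>
     (\<forall>(Q, c) \<in> S. \<forall>q \<in> Q. \<exists>c'. (Q - {q}, c') \<in> S \<and>
        card {p \<in> Q - {q}. c' p \<noteq> c p} \<le> 1)"
proof -
  define K where "K = \<lceil>log 2 (real (card P) + 1)\<rceil>"
  define S where "S = {(Q, c). Q \<subseteq> P \<and> equal_colours_separated Q c \<and> c ` Q \<subseteq> {1..K}}"
  have "0 \<le> log 2 (real (card P) + 1)" by simp
  hence "int (nat K) = K" unfolding K_def by linarith
  moreover obtain c0 where "equal_colours_separated P c0" "c0 ` P \<subseteq> {1..int (nat K)}"
    using exists_equal_colours_separated[OF assms less_two_power_ceiling_log] unfolding K_def by blast
  ultimately have "(P, c0) \<in> S" unfolding S_def by simp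
  moreover have "Q \<subseteq> P \<and> unimax_intervals Q c \<and> c ` Q \<subseteq> {1..K}" if "(Q, c) \<in> S" for Q c
    using that equal_colours_separated_imp_unimax_intervals[OF finite_subset[OF _ assms]]
    unfolding S_def by auto
  moreover have "\<exists>c'. (Q - {q}, c') \<in> S \<and> card {p \<in> Q - {q}. c' p \<noteq> c p} \<le> 1"
    if QS: "(Q, c) \<in> S" and q: "q \<in> Q" for Q c q
  proof -
    have Q: "Q \<subseteq> P" "equal_colours_separated Q c" "c ` Q \<subseteq> {1..K}" using QS unfolding S_def by auto
    obtain c' where "equal_colours_separated (Q - {q}) c'"
      "card {p \<in> Q - {q}. c' p \<noteq> c p} \<le> 1" "c' ` (Q - {q}) \<subseteq> c ` Q"
      using equal_colours_separated_delete[OF finite_subset[OF Q(1) assms] Q(2) q] .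
    with Q show ?thesis unfolding S_def by blast
  qed
  ultimately show ?thesis
    unfolding K_def[symmetric] by (intro exI[of _ S] conjI) auto
qed

end
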